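(* Assume excitatory coupling: $\varepsilon_{ij}\ge0$ for all $i,j$ and $\varepsilon>0$, with $U(\tau)+\varepsilon<1$. Then for every ordering $\mathcal O$ the following hold. 1. For each $i$, $p_{i,0}>p_{i,1}>\dots>p_{i,k_i}=1$. 2. $A_{ij}(\mathcal O)\le 0$ for all $j\neq i$, and $A_0>1$. 3. Every eigenvalue $\lambda$ of $A(\mathcal O)$ lies in the closed disk $\{z\in\mathbb C: |z-A_0|\le A_0-1\}$. This disk lies outside the open unit disk and touches the unit circle only at $z=1$; in particular $|\lambda|\ge1$.
   Context: Let $U$ be a twice continuously differentiable, strictly increasing function on an interval $I\subseteq\mathbb R$ containing $[0,1]$. Assume $U'>0$ and $U''<0$ on $I$, $U(0)=0$ and $U(1)=1$; $U^{-1}$ denotes its inverse. Fix $N\ge 2$ and a delay $\tau\in(0,1)$. For each $i$ fix a nonempty set $\mathrm{Pre}(i)\subseteq\{1,\dots,N\}\setminus\{i\}$ and put $k_i=|\mathrm{Pre}(i)|$. Fix real couplings $\varepsilon_{ij}$ with $\varepsilon_{ij}\neq0$ if and only if $j\in\mathrm{Pre}(i)$, normalized so that $\sum_j\varepsilon_{ij}=\varepsilon$ for every $i$. An ordering $\mathcal O$ is a choice, for each $i$, of an enumeration $j_1(i),\dots,j_{k_i}(i)$ of $\mathrm{Pre}(i)$. For $n\in\{0,\dots,k_i\}$ define $$p_{i,n}=\frac{U'\Big(U^{-1}\big(U(\tau)+\sum_{m=1}^{n}\varepsilon_{ij_m(i)}\big)\Big)}{U'\big(U^{-1}(U(\tau)+\varepsilon)\big)}.$$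 The stability matrix $A(\mathcal O)$ has entries - $A_{ii}=p_{i,0}$; - $A_{ij}=p_{i,n}-p_{i,n-1}$ if $j=j_n(i)$; - $A_{ij}=0$ if $j\notin\mathrm{Pre}(i)\cup\{i\}$. Write $A_0:=p_{i,0}=U'(\tau)/U'\big(U^{-1}(U(\tau)+\varepsilon)\big)$, which does not depend on $i$. *)

theory Defs
  imports Complex_Main "Jordan_Normal_Form.Char_Poly"
begin

text \<open>Nodes are indexed by 0..<N (relabelling of 1..N). An ordering assigns to each node i a
list js = ord i enumerating Pre(i) without repetition: j_m(i) = ord i ! (m-1).\<close>

text \<open>p_{i,n} with e = eps i and js = ord i; Up is U', Uinv = inv_into I U.\<close>
definition p_seq :: "(real \<Rightarrow> real) \<Rightarrow> (real \<Rightarrow> real) \<Rightarrow> real set \<Rightarrow> real \<Rightarrow> real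
    \<Rightarrow> (nat \<Rightarrow> real) \<Rightarrow> nat list \<Rightarrow> nat \<Rightarrow> real" where
  "p_seq U Up I \<tau> \<epsilon> e js n =
     Up (inv_into I U (U \<tau> + (\<Sum>m<n. e (js ! m)))) / Up (inv_into I U (U \<tau> + \<epsilon>))"

definition stab_A0 :: "(real \<Rightarrow> real) \<Rightarrow> (real \<Rightarrow> real) \<Rightarrow> real set \<Rightarrow> real \<Rightarrow> real \<Rightarrow> real" where
  "stab_A0 U Up I \<tau> \<epsilon> = Up \<tau> / Up (inv_into I U (U \<tau> + \<epsilon>))"

definition stab_entry :: "(real \<Rightarrow> real) \<Rightarrow> (real \<Rightarrow> real) \<Rightarrow> real set \<Rightarrow> real \<Rightarrow> real
    \<Rightarrow> (nat \<Rightarrow> nat \<Rightarrow> real) \<Rightarrow> (nat \<Rightarrow> nat list) \<Rightarrow> nat \<Rightarrow> nat \<Rightarrow> real" where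
  "stab_entry U Up I \<tau> \<epsilon> eps ord i j =
     (let p = p_seq U Up I \<tau> \<epsilon> (eps i) (ord i) in
      if j = i then p 0
      else if j \<in> set (ord i) then
        (let n = (THE n. n \<in> {1..length (ord i)} \<and> ord i ! (n - 1) = j) in p n - p (n - 1))
      else 0)"

definition stab_matrix :: "nat \<Rightarrow> (real \<Rightarrow> real) \<Rightarrow> (real \<Rightarrow> real) \<Rightarrow> real set \<Rightarrow> real \<Rightarrow> real
    \<Rightarrow> (nat \<Rightarrow> nat \<Rightarrow> real) \<Rightarrow> (nat \<Rightarrow> nat list) \<Rightarrow> real mat" where
  "stab_matrix N U Up I \<tau> \<epsilon> eps ord = mat N N (\<lambda>(i, j). stab_entry U Up I \<tau> \<epsilon> eps ord i j)"

end

theory Submission imports Defs begin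

(* Let V be the inverse of U.  Since U' > 0 and U'' < 0 on the interval I, U is strictly increasing
   and U' strictly decreasing, so g = U' o V is strictly decreasing on the range of U.  Along an
   ordering of Pre(i) the partial sums S_n of the (positive) couplings increase strictly from 0 to
   the total coupling eps, hence p_{i,n} = g(U tau + S_n) / g(U tau + eps) decreases strictly to 1.
   Consequently the off-diagonal entries p_{i,n} - p_{i,n-1} are nonpositive, the diagonal entry
   A_0 = p_{i,0} exceeds 1, and the absolute off-diagonal row sums telescope to A_0 - 1.
   Gershgorin's circle theorem then places every eigenvalue in the disc |z - A_0| <= A_0 - 1,
   and an elementary computation shows this disc avoids the open unit disc, touching the unit
   circle only at 1. *)

section \<open>Monotonicity from derivatives and inverse functions\<close>

lemma strict_mono_on_deriv_pos:
  fixes f f' :: "real \<Rightarrow> real"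
  assumes I: "connected I"
    and deriv: "\<And>x. x \<in> I \<Longrightarrow> (f has_real_derivative f' x) (at x within I)"
    and pos: "\<And>x. x \<in> I \<Longrightarrow> f' x > 0"
  shows "strict_mono_on I f"
proof (rule strict_mono_onI)
  fix a b assume a: "a \<in> I" and b: "b \<in> I" and ab: "a < b"
  have sub: "{a..b} \<subseteq> I" using connected_contains_Icc[OF I a b] .
  show "f a < f b"
  proof (rule DERIV_pos_imp_increasing_open[OF ab])
    fix x assume x: "a < x" "x < b"
    hence xI: "x \<in> I" using sub by auto
    have "(f has_real_derivative f' x) (at x within {a..b})"
      using has_field_derivative_subset[OF deriv[OF xI] sub] .
    hence "(f has_real_derivative f' x) (at x)" using at_within_Icc_at[OF x] by simp
    thus "\<exists>y. DERIV f x :> y \<and> y > 0" using pos[OF xI] by blast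
  next
    show "continuous_on {a..b} f"
      by (rule DERIV_continuous_on[where D=f'], rule has_field_derivative_subset[OF deriv sub])
         (use sub in auto)
  qed
qed

lemma strict_antimono_on_deriv_neg:
  fixes f f' :: "real \<Rightarrow> real"
  assumes I: "connected I"
    and deriv: "\<And>x. x \<in> I \<Longrightarrow> (f has_real_derivative f' x) (at x within I)"
    and neg: "\<And>x. x \<in> I \<Longrightarrow> f' x < 0"
  shows "strict_antimono_on I f"
proof -
  have "strict_mono_on I (\<lambda>x. - f x)"
    by (rule strict_mono_on_deriv_pos[OF I, where f'="\<lambda>x. - f' x"])
       (auto intro!: derivative_eq_intros deriv simp: neg)
  thus ?thesis by (auto simp: monotone_on_def)
qed

lemma strict_antimono_on_comp_inv_into:
  fixes f h :: "real \<Rightarrow> real"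
  assumes f: "strict_mono_on I f" and h: "strict_antimono_on I h"
  shows "strict_antimono_on (f ` I) (\<lambda>y. h (inv_into I f y))"
proof (rule monotone_onI)
  fix y z assume "y \<in> f ` I" "z \<in> f ` I" "y < z"
  then obtain a b where a: "a \<in> I" "y = f a" and b: "b \<in> I" "z = f b" and "f a < f b"
    by auto
  hence "a < b" using strict_mono_on_less[OF f a(1) b(1)] by simp
  hence "h b < h a" using monotone_onD[OF h a(1) b(1)] by simp
  thus "h (inv_into I f z) < h (inv_into I f y)"
    using a b inv_into_f_f[OF strict_mono_on_imp_inj_on[OF f]] by simp
qed

lemma Icc_subset_image:
  fixes f :: "real \<Rightarrow> real"
  assumes ab: "a \<le> b" and sub: "{a..b} \<subseteq> I" and cont: "continuous_on {a..b} f"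
  shows "{f a..f b} \<subseteq> f ` I"
proof
  fix y assume "y \<in> {f a..f b}"
  then obtain x where "a \<le> x" "x \<le> b" "f x = y"
    using IVT'[of f a y b, OF _ _ ab cont] by auto
  thus "y \<in> f ` I" using sub by force
qed

lemma derivative_along_inverse:
  fixes U Up Upp :: "real \<Rightarrow> real" and I :: "real set" and \<tau> \<epsilon> :: real
  assumes I_interval: "connected I" and I_01: "{0..1} \<subseteq> I"
    and U_deriv: "\<And>x. x \<in> I \<Longrightarrow> (U has_real_derivative Up x) (at x within I)"
    and Up_deriv: "\<And>x. x \<in> I \<Longrightarrow> (Up has_real_derivative Upp x) (at x within I)"
    and Up_pos: "\<And>x. x \<in> I \<Longrightarrow> Up x > 0"
    and Upp_neg: "\<And>x. x \<in> I \<Longrightarrow> Upp x < 0"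
    and U0: "U 0 = 0" and U1: "U 1 = 1"
    and tau: "0 \<le> \<tau>" "\<tau> \<le> 1" and eps: "0 \<le> \<epsilon>" "U \<tau> + \<epsilon> \<le> 1"
  shows "strict_antimono_on {U \<tau>..U \<tau> + \<epsilon>} (\<lambda>y. Up (inv_into I U y))"
    and "Up (inv_into I U (U \<tau> + \<epsilon>)) > 0"
    and "inv_into I U (U \<tau>) = \<tau>"
proof -
  have U_mono: "strict_mono_on I U" by (rule strict_mono_on_deriv_pos[OF I_interval U_deriv Up_pos])
  have Up_anti: "strict_antimono_on I Up"
    by (rule strict_antimono_on_deriv_neg[OF I_interval Up_deriv Upp_neg])
  have U_cont: "continuous_on {0..1} U"
    using continuous_on_subset[OF DERIV_continuous_on[OF U_deriv] I_01] .
  have I0: "0 \<in> I" and I_tau: "\<tau> \<in> I" using I_01 tau by auto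
  hence "U 0 \<le> U \<tau>" using strict_mono_on_leD[OF U_mono] tau(1) by blast
  hence range: "{U \<tau>..U \<tau> + \<epsilon>} \<subseteq> U ` I"
    using Icc_subset_image[OF _ I_01 U_cont] U0 U1 eps(2) by auto
  show "strict_antimono_on {U \<tau>..U \<tau> + \<epsilon>} (\<lambda>y. Up (inv_into I U y))"
    using monotone_on_subset[OF strict_antimono_on_comp_inv_into[OF U_mono Up_anti] range] .
  have "U \<tau> + \<epsilon> \<in> U ` I" using range eps(1) by auto
  thus "Up (inv_into I U (U \<tau> + \<epsilon>)) > 0" by (simp add: Up_pos inv_into_into)
  show "inv_into I U (U \<tau>) = \<tau>"
    by (rule inv_into_f_f[OF strict_mono_on_imp_inj_on[OF U_mono] I_tau])
qed

lemma partial_sum_bounds: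
  fixes w :: "nat \<Rightarrow> real"
  assumes pos: "\<And>m. m < k \<Longrightarrow> w m > 0" and nk: "n \<le> k"
  shows "0 \<le> (\<Sum>m<n. w m)" "(\<Sum>m<n. w m) \<le> (\<Sum>m<k. w m)"
proof -
  have nonneg: "0 \<le> w m" if "m < k" for m using pos[OF that] by simp
  show "0 \<le> (\<Sum>m<n. w m)" using nonneg nk by (intro sum_nonneg) auto
  show "(\<Sum>m<n. w m) \<le> (\<Sum>m<k. w m)" using nonneg nk by (intro sum_mono2) auto
qed

lemma enumerated_weights:
  fixes e :: "nat \<Rightarrow> real"
  assumes fin: "finite S" and dist: "distinct js" and sub: "set js \<subseteq> S"
    and supp: "\<And>j. j \<in> S \<Longrightarrow> e j \<noteq> 0 \<longleftrightarrow> j \<in> set js"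
    and nonneg: "\<And>j. j \<in> S \<Longrightarrow> e j \<ge> 0"
  shows "\<And>m. m < length js \<Longrightarrow> e (js ! m) > 0"
    and "(\<Sum>m<length js. e (js ! m)) = sum e S"
proof -
  fix m assume "m < length js"
  hence "js ! m \<in> set js" "js ! m \<in> S" using sub by auto
  thus "e (js ! m) > 0" using supp nonneg by (metis order_le_less)
next
  have "(\<Sum>m<length js. e (js ! m)) = sum e (set js)"
    using sum.reindex_bij_betw[OF bij_betw_nth[OF dist refl refl], of e] by simp
  also have "\<dots> = sum e S"
    using fin sub supp by (intro sum.mono_neutral_left) auto
  finally show "(\<Sum>m<length js. e (js ! m)) = sum e S" .
qed

lemma p_seq_profile:
  fixes U Up :: "real \<Rightarrow> real" and I :: "real set" and \<tau> \<epsilon> :: real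
    and e :: "nat \<Rightarrow> real" and js :: "nat list"
  defines "p \<equiv> p_seq U Up I \<tau> \<epsilon> e js"
  assumes anti: "strict_antimono_on {U \<tau>..U \<tau> + \<epsilon>} (\<lambda>y. Up (inv_into I U y))"
    and den: "Up (inv_into I U (U \<tau> + \<epsilon>)) > 0"
    and wpos: "\<And>m. m < length js \<Longrightarrow> e (js ! m) > 0"
    and wsum: "(\<Sum>m<length js. e (js ! m)) = \<epsilon>"
  shows "\<And>n. n < length js \<Longrightarrow> p (Suc n) < p n"
    and "p (length js) = 1"
    and "\<And>n. n \<le> length js \<Longrightarrow> 1 \<le> p n"
proof -
  define g where "g y = Up (inv_into I U y)" for y
  define S where "S n = (\<Sum>m<n. e (js ! m))" for n
  have p_eq: "p n = g (U \<tau> + S n) / g (U \<tau> + \<epsilon>)" for n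
    unfolding p_def p_seq_def g_def S_def ..
  have S_in: "U \<tau> + S n \<in> {U \<tau>..U \<tau> + \<epsilon>}" if "n \<le> length js" for n
    using partial_sum_bounds[of "length js" "\<lambda>m. e (js ! m)" n] wpos that wsum
    unfolding S_def by simp
  have g_pos: "g (U \<tau> + \<epsilon>) > 0" using den by (simp add: g_def)
  show "p (Suc n) < p n" if n: "n < length js" for n
  proof -
    have "S n < S (Suc n)" using wpos[OF n] by (simp add: S_def)
    hence "g (U \<tau> + S (Suc n)) < g (U \<tau> + S n)"
      using monotone_onD[OF anti] S_in n unfolding g_def by simp
    thus ?thesis unfolding p_eq using g_pos by (simp add: divide_strict_right_mono)
  qed
  show "p (length js) = 1" using g_pos wsum unfolding p_eq S_def by simp
  show "1 \<le> p n" if n: "n \<le> length js" for n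
  proof -
    have "g (U \<tau> + \<epsilon>) \<le> g (U \<tau> + S n)"
    proof (cases "S n = \<epsilon>")
      case False
      hence "U \<tau> + S n < U \<tau> + \<epsilon>" using S_in[OF n] by simp
      moreover have "U \<tau> + \<epsilon> \<in> {U \<tau>..U \<tau> + \<epsilon>}"
        using S_in[of "length js"] wsum by (simp add: S_def)
      ultimately show ?thesis
        using monotone_onD[OF anti S_in[OF n]] unfolding g_def by fastforce
    qed simp
    thus ?thesis unfolding p_eq using g_pos by simp
  qed
qed

section \<open>Rows of the stability matrix\<close>

lemma stab_entry_diag:
  "stab_entry U Up I \<tau> \<epsilon> eps ord i i = p_seq U Up I \<tau> \<epsilon> (eps i) (ord i) 0"
  by (simp add: stab_entry_def)

lemma stab_entry_enumerated:
  assumes dist: "distinct (ord i)" and m: "m < length (ord i)" and ne: "ord i ! m \<noteq> i"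
  shows "stab_entry U Up I \<tau> \<epsilon> eps ord i (ord i ! m)
       = p_seq U Up I \<tau> \<epsilon> (eps i) (ord i) (Suc m) - p_seq U Up I \<tau> \<epsilon> (eps i) (ord i) m"
proof -
  have position: "(THE n. n \<in> {1..length (ord i)} \<and> ord i ! (n - 1) = ord i ! m) = Suc m"
  proof (rule the_equality)
    fix n assume n: "n \<in> {1..length (ord i)} \<and> ord i ! (n - 1) = ord i ! m"
    hence "n - 1 = m" using nth_eq_iff_index_eq[OF dist] m by auto
    thus "n = Suc m" using n by auto
  qed (use m in auto)
  show ?thesis using ne m unfolding stab_entry_def Let_def position by simp
qed

lemma stab_entry_unrelated:
  "j \<noteq> i \<Longrightarrow> j \<notin> set (ord i) \<Longrightarrow> stab_entry U Up I \<tau> \<epsilon> eps ord i j = 0"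
  by (simp add: stab_entry_def)

lemma stab_row_offdiag:
  fixes U Up :: "real \<Rightarrow> real" and I :: "real set" and \<tau> \<epsilon> :: real
    and eps :: "nat \<Rightarrow> nat \<Rightarrow> real" and ord :: "nat \<Rightarrow> nat list" and i :: nat
    and S :: "nat set"
  defines "p \<equiv> p_seq U Up I \<tau> \<epsilon> (eps i) (ord i)"
    and "a \<equiv> stab_entry U Up I \<tau> \<epsilon> eps ord i"
  assumes dist: "distinct (ord i)" and notin: "i \<notin> set (ord i)"
    and dec: "\<forall>n<length (ord i). p (Suc n) \<le> p n"
  shows "\<And>j. j \<noteq> i \<Longrightarrow> a j \<le> 0"
    and "finite S \<Longrightarrow> set (ord i) \<subseteq> S \<Longrightarrow> (\<Sum>j\<in>S - {i}. \<bar>a j\<bar>) = p 0 - p (length (ord i))"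
proof -
  have entry: "a (ord i ! m) = p (Suc m) - p m" if "m < length (ord i)" for m
  proof -
    have "ord i ! m \<noteq> i" using notin nth_mem[OF that] by auto
    thus ?thesis unfolding a_def p_def
      by (rule stab_entry_enumerated[where ord=ord and i=i, OF dist that])
  qed
  show "a j \<le> 0" if "j \<noteq> i" for j
  proof (cases "j \<in> set (ord i)")
    case True
    then obtain m where "m < length (ord i)" "j = ord i ! m" by (metis in_set_conv_nth)
    thus ?thesis using entry dec by force
  qed (simp add: a_def stab_entry_unrelated that)
  assume fin: "finite S" and sub: "set (ord i) \<subseteq> S"
  have "(\<Sum>j\<in>S - {i}. \<bar>a j\<bar>) = (\<Sum>j\<in>set (ord i). \<bar>a j\<bar>)"
    using fin sub notin by (intro sum.mono_neutral_right) (auto simp: a_def stab_entry_unrelated)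
  also have "\<dots> = (\<Sum>m<length (ord i). \<bar>a (ord i ! m)\<bar>)"
    using sum.reindex_bij_betw[OF bij_betw_nth[OF dist refl refl], of "\<lambda>j. \<bar>a j\<bar>"]
    by simp
  also have "\<dots> = (\<Sum>m<length (ord i). p m - p (Suc m))"
    using entry dec by (intro sum.cong) auto
  also have "\<dots> = p 0 - p (length (ord i))" by (rule sum_lessThan_telescope')
  finally show "(\<Sum>j\<in>S - {i}. \<bar>a j\<bar>) = p 0 - p (length (ord i))" .
qed

lemma stab_row_properties:
  fixes U Up :: "real \<Rightarrow> real" and I :: "real set" and \<tau> \<epsilon> :: real
    and eps :: "nat \<Rightarrow> nat \<Rightarrow> real" and ord :: "nat \<Rightarrow> nat list" and i N :: nat
  defines "p \<equiv> p_seq U Up I \<tau> \<epsilon> (eps i) (ord i)"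
    and "a \<equiv> stab_entry U Up I \<tau> \<epsilon> eps ord i"
  assumes anti: "strict_antimono_on {U \<tau>..U \<tau> + \<epsilon>} (\<lambda>y. Up (inv_into I U y))"
    and den: "Up (inv_into I U (U \<tau> + \<epsilon>)) > 0"
    and dist: "distinct (ord i)" and sub: "set (ord i) \<subseteq> {0..<N} - {i}"
    and supp: "\<forall>j<N. eps i j \<noteq> 0 \<longleftrightarrow> j \<in> set (ord i)"
    and nonneg: "\<forall>j<N. eps i j \<ge> 0"
    and total: "(\<Sum>j<N. eps i j) = \<epsilon>"
  shows "\<forall>n<length (ord i). p (Suc n) < p n"
    and "\<forall>n\<le>length (ord i). 1 \<le> p n"
    and "p (length (ord i)) = 1"
    and "\<forall>j. j \<noteq> i \<longrightarrow> a j \<le> 0"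
    and "(\<Sum>j\<in>{0..<N} - {i}. \<bar>a j\<bar>) = p 0 - 1"
proof -
  have sub': "set (ord i) \<subseteq> {0..<N}" and notin: "i \<notin> set (ord i)" using sub by auto
  note w = enumerated_weights[OF finite_atLeastLessThan dist sub', of "eps i"]
  have wpos: "\<And>m. m < length (ord i) \<Longrightarrow> eps i (ord i ! m) > 0"
    using w(1) supp nonneg by auto
  have wsum: "(\<Sum>m<length (ord i). eps i (ord i ! m)) = \<epsilon>"
    using w(2) supp nonneg total by (auto simp: atLeast0LessThan)
  note profile = p_seq_profile[OF anti den wpos wsum, folded p_def]
  show dec: "\<forall>n<length (ord i). p (Suc n) < p n" and "\<forall>n\<le>length (ord i). 1 \<le> p n"
    and last: "p (length (ord i)) = 1"
    using profile by auto
  have "\<forall>n<length (ord i). p (Suc n) \<le> p n" using dec by (simp add: less_imp_le)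
  note offdiag = stab_row_offdiag[where eps=eps and ord=ord and i=i, OF dist notin this[unfolded p_def],
      folded p_def a_def]
  show "\<forall>j. j \<noteq> i \<longrightarrow> a j \<le> 0" using offdiag(1) by blast
  show "(\<Sum>j\<in>{0..<N} - {i}. \<bar>a j\<bar>) = p 0 - 1"
    using offdiag(2)[OF finite_atLeastLessThan sub'] last by simp
qed

section \<open>Gershgorin's circle theorem and the location of the disc\<close>

text \<open>Proof: evaluate the eigenvalue
  equation at a coordinate of maximal modulus.\<close>
lemma gershgorin_disc:
  fixes M :: "'a::real_normed_field mat"
  assumes M: "M \<in> carrier_mat n n" and ev: "eigenvalue M lam"
  shows "\<exists>i<n. norm (lam - M $$ (i, i)) \<le> (\<Sum>j\<in>{0..<n} - {i}. norm (M $$ (i, j)))"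
proof -
  obtain v where v: "v \<in> carrier_vec n" "v \<noteq> 0\<^sub>v n" "M *\<^sub>v v = lam \<cdot>\<^sub>v v"
    using ev M unfolding eigenvalue_def eigenvector_def by auto
  obtain j where j: "j < n" "v $ j \<noteq> 0"
    using v(1,2) by (metis eq_vecI carrier_vecD index_zero_vec)
  define r where "r = Max ((\<lambda>j. norm (v $ j)) ` {0..<n})"
  have "r \<in> (\<lambda>j. norm (v $ j)) ` {0..<n}" unfolding r_def using j(1) by (intro Max_in) auto
  then obtain i where i: "i < n" and vi: "norm (v $ i) = r" by auto
  have vmax: "norm (v $ l) \<le> r" if "l < n" for l
    unfolding r_def using that by (intro Max_ge) auto
  have r_pos: "r > 0" using vmax[OF j(1)] j(2) by (smt (verit) zero_less_norm_iff)
  have "lam * v $ i = (\<Sum>l\<in>{0..<n}. M $$ (i, l) * v $ l)"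
    using arg_cong[OF v(3), of "\<lambda>w. w $ i"] i v(1) M by (simp add: scalar_prod_def)
  also have "\<dots> = M $$ (i, i) * v $ i + (\<Sum>l\<in>{0..<n} - {i}. M $$ (i, l) * v $ l)"
    using i by (subst sum.remove[of _ i]) auto
  finally have "(lam - M $$ (i, i)) * v $ i = (\<Sum>l\<in>{0..<n} - {i}. M $$ (i, l) * v $ l)"
    by (simp add: algebra_simps)
  hence "norm (lam - M $$ (i, i)) * r = norm (\<Sum>l\<in>{0..<n} - {i}. M $$ (i, l) * v $ l)"
    by (metis norm_mult vi)
  also have "\<dots> \<le> (\<Sum>l\<in>{0..<n} - {i}. norm (M $$ (i, l)) * r)"
    using vmax by (intro order_trans[OF norm_sum] sum_mono) (auto simp: norm_mult mult_left_mono)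
  also have "\<dots> = (\<Sum>l\<in>{0..<n} - {i}. norm (M $$ (i, l))) * r" by (rule sum_distrib_right[symmetric])
  finally show ?thesis using i r_pos by auto
qed

lemma eigenvalue_in_constant_disc:
  fixes a :: "nat \<Rightarrow> nat \<Rightarrow> real"
  assumes diag: "\<And>i. i < n \<Longrightarrow> a i i = c"
    and radius: "\<And>i. i < n \<Longrightarrow> (\<Sum>j\<in>{0..<n} - {i}. \<bar>a i j\<bar>) = r"
    and ev: "eigenvalue (map_mat complex_of_real (mat n n (\<lambda>(i, j). a i j))) lam"
  shows "cmod (lam - complex_of_real c) \<le> r"
proof -
  let ?M = "map_mat complex_of_real (mat n n (\<lambda>(i, j). a i j))"
  have "?M \<in> carrier_mat n n" by simp
  from gershgorin_disc[OF this ev] obtain i where i: "i < n"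
    and disc: "cmod (lam - ?M $$ (i, i)) \<le> (\<Sum>j\<in>{0..<n} - {i}. cmod (?M $$ (i, j)))"
    by blast
  have "(\<Sum>j\<in>{0..<n} - {i}. cmod (?M $$ (i, j))) = (\<Sum>j\<in>{0..<n} - {i}. \<bar>a i j\<bar>)"
    using i by (intro sum.cong) auto
  thus ?thesis using disc diag[OF i] radius[OF i] i by simp
qed

lemma disc_outside_unit_disc:
  fixes a :: real and z :: complex
  assumes a: "a \<ge> 1" and z: "cmod (z - of_real a) \<le> a - 1"
  shows "cmod z \<ge> 1" and "cmod z = 1 \<Longrightarrow> z = 1"
proof -
  have "a = cmod (of_real a)" using a by simp
  also have "\<dots> \<le> cmod z + cmod (z - of_real a)" by (metis norm_triangle_sub norm_minus_commute)
  finally show "cmod z \<ge> 1" using z by linarith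
  assume z1: "cmod z = 1"
  have "(Re z - a)\<^sup>2 + (Im z)\<^sup>2 = (cmod (z - of_real a))\<^sup>2" by (simp add: cmod_power2)
  also have "\<dots> \<le> (a - 1)\<^sup>2" using z by (intro power_mono) auto
  finally have "(Re z - a)\<^sup>2 + (Im z)\<^sup>2 \<le> (a - 1)\<^sup>2" .
  moreover have unit: "(Re z)\<^sup>2 + (Im z)\<^sup>2 = 1" using z1 cmod_power2[of z] by simp
  ultimately have "a * 1 \<le> a * Re z" by (simp add: power2_eq_square algebra_simps)
  hence "Re z \<ge> 1" using a by simp
  moreover have "Re z \<le> 1" using z1 abs_Re_le_cmod[of z] by simp
  ultimately have "Re z = 1" by simp
  moreover hence "Im z = 0" using unit by simp
  ultimately show "z = 1" by (simp add: complex_eq_iff)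
qed

theorem mainTheorem4:
  fixes U Up Upp :: "real \<Rightarrow> real" and I :: "real set"
    and N :: nat and \<tau> \<epsilon> :: real
    and Pre :: "nat \<Rightarrow> nat set" and eps :: "nat \<Rightarrow> nat \<Rightarrow> real"
    and ord :: "nat \<Rightarrow> nat list"
  assumes I_interval: "connected I" and I_01: "{0..1} \<subseteq> I"
    and U_deriv: "\<And>x. x \<in> I \<Longrightarrow> (U has_real_derivative Up x) (at x within I)"
    and Up_deriv: "\<And>x. x \<in> I \<Longrightarrow> (Up has_real_derivative Upp x) (at x within I)"
    and Upp_cont: "continuous_on I Upp"
    and Up_pos: "\<And>x. x \<in> I \<Longrightarrow> Up x > 0"
    and Upp_neg: "\<And>x. x \<in> I \<Longrightarrow> Upp x < 0"
    and U0: "U 0 = 0" and U1: "U 1 = 1"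
    and N2: "N \<ge> 2"
    and tau: "0 < \<tau>" "\<tau> < 1"
    and Pre_sub: "\<And>i. i < N \<Longrightarrow> Pre i \<subseteq> {0..<N} - {i}"
    and Pre_ne: "\<And>i. i < N \<Longrightarrow> Pre i \<noteq> {}"
    and eps_nz: "\<And>i j. i < N \<Longrightarrow> j < N \<Longrightarrow> (eps i j \<noteq> 0 \<longleftrightarrow> j \<in> Pre i)"
    and eps_sum: "\<And>i. i < N \<Longrightarrow> (\<Sum>j<N. eps i j) = \<epsilon>"
    and ord_enum: "\<And>i. i < N \<Longrightarrow> distinct (ord i) \<and> set (ord i) = Pre i"
    and excit: "\<And>i j. i < N \<Longrightarrow> j < N \<Longrightarrow> eps i j \<ge> 0"
    and eps_pos: "\<epsilon> > 0"
    and below1: "U \<tau> + \<epsilon> < 1"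
  shows "(\<forall>i<N. (\<forall>n<length (ord i).
              p_seq U Up I \<tau> \<epsilon> (eps i) (ord i) n > p_seq U Up I \<tau> \<epsilon> (eps i) (ord i) (Suc n))
            \<and> p_seq U Up I \<tau> \<epsilon> (eps i) (ord i) (length (ord i)) = 1)
    \<and> (\<forall>i<N. \<forall>j<N. j \<noteq> i \<longrightarrow> stab_entry U Up I \<tau> \<epsilon> eps ord i j \<le> 0)
    \<and> stab_A0 U Up I \<tau> \<epsilon> > 1
    \<and> (\<forall>lam. eigenvalue (map_mat complex_of_real (stab_matrix N U Up I \<tau> \<epsilon> eps ord)) lam \<longrightarrow>
           cmod (lam - complex_of_real (stab_A0 U Up I \<tau> \<epsilon>)) \<le> stab_A0 U Up I \<tau> \<epsilon> - 1)
    \<and> (\<forall>z. cmod (z - complex_of_real (stab_A0 U Up I \<tau> \<epsilon>)) \<le> stab_A0 U Up I \<tau> \<epsilon> - 1 \<longrightarrow>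
           cmod z \<ge> 1 \<and> (cmod z = 1 \<longrightarrow> z = 1))
    \<and> (\<forall>lam. eigenvalue (map_mat complex_of_real (stab_matrix N U Up I \<tau> \<epsilon> eps ord)) lam \<longrightarrow>
           cmod lam \<ge> 1)"
proof -
  define A0 where "A0 = stab_A0 U Up I \<tau> \<epsilon>"
  have analytic: "strict_antimono_on {U \<tau>..U \<tau> + \<epsilon>} (\<lambda>y. Up (inv_into I U y))"
      "Up (inv_into I U (U \<tau> + \<epsilon>)) > 0" "inv_into I U (U \<tau>) = \<tau>"
    using derivative_along_inverse[OF I_interval I_01 U_deriv Up_deriv Up_pos Upp_neg U0 U1, of \<tau> \<epsilon>]
      tau eps_pos below1 by auto
  have p0: "p_seq U Up I \<tau> \<epsilon> (eps i) (ord i) 0 = A0" for i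
    using analytic(3) by (simp add: A0_def p_seq_def stab_A0_def)
  have row_hyps: "distinct (ord i)" "set (ord i) \<subseteq> {0..<N} - {i}"
      "\<forall>j<N. eps i j \<noteq> 0 \<longleftrightarrow> j \<in> set (ord i)" "\<forall>j<N. eps i j \<ge> 0" "(\<Sum>j<N. eps i j) = \<epsilon>"
    if "i < N" for i
    using ord_enum[OF that] Pre_sub[OF that] eps_nz[OF that] excit[OF that] eps_sum[OF that] by auto
  have row: "\<forall>n<length (ord i).
        p_seq U Up I \<tau> \<epsilon> (eps i) (ord i) (Suc n) < p_seq U Up I \<tau> \<epsilon> (eps i) (ord i) n"
      "\<forall>n\<le>length (ord i). 1 \<le> p_seq U Up I \<tau> \<epsilon> (eps i) (ord i) n"
      "p_seq U Up I \<tau> \<epsilon> (eps i) (ord i) (length (ord i)) = 1"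
      "\<forall>j. j \<noteq> i \<longrightarrow> stab_entry U Up I \<tau> \<epsilon> eps ord i j \<le> 0"
      "(\<Sum>j\<in>{0..<N} - {i}. \<bar>stab_entry U Up I \<tau> \<epsilon> eps ord i j\<bar>) = A0 - 1"
    if "i < N" for i
    using stab_row_properties[where eps=eps and ord=ord and i=i, OF analytic(1,2) row_hyps[OF that]]
    unfolding p0 by auto
  have N0: "0 < N" and "ord 0 \<noteq> []" using Pre_ne[of 0] ord_enum[of 0] N2 by auto
  hence "p_seq U Up I \<tau> \<epsilon> (eps 0) (ord 0) (Suc 0) < A0"
      "1 \<le> p_seq U Up I \<tau> \<epsilon> (eps 0) (ord 0) (Suc 0)"
    using row(1)[OF N0] row(2)[OF N0] p0[of 0] by (auto simp: Suc_le_eq)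
  hence A0_gt: "A0 > 1" by linarith
  have eigen: "cmod (lam - complex_of_real A0) \<le> A0 - 1"
    if "eigenvalue (map_mat complex_of_real (stab_matrix N U Up I \<tau> \<epsilon> eps ord)) lam" for lam
    by (rule eigenvalue_in_constant_disc[OF _ _ that[unfolded stab_matrix_def]])
       (simp_all add: stab_entry_diag p0 row(5))
  have outside: "cmod z \<ge> 1 \<and> (cmod z = 1 \<longrightarrow> z = 1)"
    if "cmod (z - complex_of_real A0) \<le> A0 - 1" for z
    using disc_outside_unit_disc[OF _ that] A0_gt by auto
  show ?thesis
    unfolding A0_def[symmetric] using row(1,3,4) A0_gt eigen outside by (intro conjI allI impI) auto
qed

end
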